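(* Fix real constants $u,v$ with $0<u<v<1$, and let $n\ge 1$ be an integer. Let $\beta>1$ be real and let $f(x)\in\mathbb Z[x]$ be a monic polynomial of degree $2n+2$ such that $f(\beta)=0$, $f(0)=1$, $$ \beta> \max\left\{ \frac 2u, \frac 1{1-v} \right\}, $$ and $$ \frac{f(x)}{(x-\beta)(x-1/\beta)} = x^{2n}+1+\sum_{i=1}^{2n-1}g_i x^i $$ for real numbers $g_i$ satisfying $u<g_i<v$ for $i=1,\dots,2n-1$. Then $f(x)$ is self-reciprocal (i.e. $x^{2n+2}f(1/x)=f(x)$) and $d_{\beta}(1)$ is $(1,2n+1)$-periodic.
   Context: For a real $\beta>1$, the beta transformation is $T_\beta(x)=\beta x-\lfloor \beta x\rfloor$ on $[0,1)$; for $x\in[0,1)$ put $x_n=\lfloor \beta T_\beta^{n-1}(x)\rfloor$ and $d_\beta(x)=x_1x_2x_3\cdots$. The expansion of one is $d_\beta(1):=\lim_{\epsilon\downarrow 0} d_\beta(1-\epsilon)$ (limit in the product topology). An infinite word $x_1x_2\cdots$ is eventually periodic if it can be written $x_1\cdots x_m(x_{m+1}\cdots x_{m+p})^\infty$ with $m\ge 0$, $p\ge 1$; choosing $m$ and $p$ minimal, the word is called $(m,p)$-periodic. *)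

theory Defs
  imports "HOL-Analysis.Analysis" "HOL-Computational_Algebra.Polynomial"
begin

definition beta_T :: "real \<Rightarrow> real \<Rightarrow> real" where
  "beta_T \<beta> x = \<beta> * x - of_int \<lfloor>\<beta> * x\<rfloor>"

text \<open>Digit sequence, 0-indexed: beta_digits b x k is x_(k+1) = floor(b * T^k x).\<close>
definition beta_digits :: "real \<Rightarrow> real \<Rightarrow> nat \<Rightarrow> int" where
  "beta_digits \<beta> x k = \<lfloor>\<beta> * ((beta_T \<beta> ^^ k) x)\<rfloor>"

text \<open>Expansion of one: limit as eps tends to 0 from the right of the digit sequence
  of 1 - eps in the product topology on sequences of integers, i.e. coordinatewise
  limits in the discrete space of integers.\<close>
definition beta_one :: "real \<Rightarrow> nat \<Rightarrow> int" where
  "beta_one \<beta> k = Lim (at_right 0) (\<lambda>\<epsilon>. beta_digits \<beta> (1 - \<epsilon>) k)"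

definition periodic_from :: "(nat \<Rightarrow> 'a) \<Rightarrow> nat \<Rightarrow> nat \<Rightarrow> bool" where
  "periodic_from w m p \<longleftrightarrow> p \<ge> 1 \<and> (\<forall>k\<ge>m. w (k + p) = w k)"

definition mp_periodic :: "(nat \<Rightarrow> 'a) \<Rightarrow> nat \<Rightarrow> nat \<Rightarrow> bool" where
  "mp_periodic w m p \<longleftrightarrow> periodic_from w m p
     \<and> (\<forall>m' p'. periodic_from w m' p' \<longrightarrow> m \<le> m')
     \<and> (\<forall>p'. periodic_from w m p' \<longrightarrow> p \<le> p')"

end

theory Submission
  imports Defs
begin

(* Let N = 2n, let H be the cofactor f / ((x - \<beta>)(x - 1/\<beta>)) and E = (1 - x/\<beta>) H, so that
   f = (1 - \<beta> x) E. Comparing coefficients gives \<beta> e_k = e_(k+1) - c_(k+1) with c_(k+1) an integer, so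
   as long as the coefficients e_k of E lie in [0,1) they form the orbit T^k(1) of 1. The bounds on the
   g_i and on \<beta> put e_1, ..., e_N into (0,1) and away from 1 - 1/\<beta>; since e_(N+1) = -1/\<beta>, the
   orbit continues with T^(N+1)(1) = 1 - 1/\<beta> and T^(N+2)(1) = T(1). The orbit never reaches 0, so
   d_\<beta>(1) is the digit sequence of 1 itself, and since digit sequences determine points of [0,1], the
   periodicity type of d_\<beta>(1) is that of the orbit, namely (1, N+1).
   For self-reciprocity, write p' for the reflection of p: then f - f' = (x - \<beta>)(x - 1/\<beta>)(H - H'),
   where f - f' has integer coefficients and H - H' coefficients of absolute value < 1. As the quadratic
   factor has constant term 1, H - H' vanishes coefficient by coefficient. *)

lemma funpow_shift:
  fixes f :: "'a \<Rightarrow> 'a"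
  assumes "(f ^^ a) x = (f ^^ b) x"
  shows "(f ^^ (j + a)) x = (f ^^ (j + b)) x"
  using assms by (simp add: funpow_add)

lemma funpow_eq_funpow_mod:
  fixes f :: "'a \<Rightarrow> 'a"
  assumes "(f ^^ (m + p)) x = (f ^^ m) x" "0 < p" "m \<le> k"
  shows "(f ^^ k) x = (f ^^ (m + (k - m) mod p)) x"
  using assms(3)
proof (induction k rule: less_induct)
  case (less k)
  show ?case
  proof (cases "k < m + p")
    case True
    then show ?thesis
      using less.prems by simp
  next
    case False
    then have "(f ^^ k) x = (f ^^ (k - p)) x"
      using funpow_shift[OF assms(1), of "k - (m + p)"] by simp
    also have "\<dots> = (f ^^ (m + (k - p - m) mod p)) x"
      using less.IH[of "k - p"] False assms(2) by simp
    also have "(k - p - m) mod p = (k - m) mod p"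
      using False le_mod_geq[of p "k - m"] by (simp add: diff_commute ac_simps)
    finally show ?thesis .
  qed
qed

lemma beta_T_eqI:
  assumes "\<beta> * x = of_int m + y" "0 \<le> y" "y < 1"
  shows "beta_T \<beta> x = y"
proof -
  have "\<lfloor>\<beta> * x\<rfloor> = m"
    using assms by (simp add: floor_eq_iff)
  then show ?thesis
    using assms(1) by (simp add: beta_T_def)
qed

lemma beta_T_bounds: "0 \<le> beta_T \<beta> x" "beta_T \<beta> x < 1"
  unfolding beta_T_def by linarith+

lemma funpow_beta_T_Suc:
  "(beta_T \<beta> ^^ Suc k) x = \<beta> * (beta_T \<beta> ^^ k) x - \<lfloor>\<beta> * (beta_T \<beta> ^^ k) x\<rfloor>"
  by (simp add: beta_T_def)

lemma funpow_beta_T_one_bounds: "(beta_T \<beta> ^^ k) 1 \<in> {0..1}"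
  by (cases k) (simp_all add: beta_T_bounds less_imp_le)

lemma beta_T_diff_inverse:
  assumes "\<beta> \<noteq> 0"
  shows "beta_T \<beta> (x - 1 / \<beta>) = beta_T \<beta> x"
proof -
  have "\<beta> * (x - 1 / \<beta>) = \<beta> * x - 1"
    using assms by (simp add: algebra_simps)
  then show ?thesis
    by (simp add: beta_T_def)
qed

lemma floor_beta_mult_diff:
  assumes "0 \<le> \<beta> * \<delta>" "\<beta> * \<delta> \<le> beta_T \<beta> x"
  shows "\<lfloor>\<beta> * (x - \<delta>)\<rfloor> = \<lfloor>\<beta> * x\<rfloor>"
  using assms beta_T_bounds(2)[of \<beta> x] unfolding beta_T_def
  by (simp add: floor_eq_iff right_diff_distrib)

lemma funpow_beta_T_diff:
  assumes "0 \<le> \<beta>" "0 \<le> \<epsilon>" "\<forall>j\<in>{1..k}. \<beta> ^ j * \<epsilon> \<le> (beta_T \<beta> ^^ j) x"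
  shows "(beta_T \<beta> ^^ k) (x - \<epsilon>) = (beta_T \<beta> ^^ k) x - \<beta> ^ k * \<epsilon>"
  using assms(3)
proof (induction k)
  case (Suc k)
  let ?y = "(beta_T \<beta> ^^ k) x"
  have IH: "(beta_T \<beta> ^^ k) (x - \<epsilon>) = ?y - \<beta> ^ k * \<epsilon>"
    using Suc by simp
  have "\<beta> ^ Suc k * \<epsilon> \<le> (beta_T \<beta> ^^ Suc k) x"
    using bspec[OF Suc.prems, of "Suc k"] by simp
  then have "0 \<le> \<beta> * (\<beta> ^ k * \<epsilon>)" "\<beta> * (\<beta> ^ k * \<epsilon>) \<le> beta_T \<beta> ?y"
    using assms(1,2) by (simp_all add: mult.assoc)
  from floor_beta_mult_diff[OF this] show ?case
    unfolding funpow.simps comp_apply IH by (simp add: beta_T_def algebra_simps)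
qed simp

lemma beta_digits_diff:
  assumes "0 \<le> \<beta>" "0 \<le> \<epsilon>" "\<forall>j\<in>{1..Suc k}. \<beta> ^ j * \<epsilon> \<le> (beta_T \<beta> ^^ j) x"
  shows "beta_digits \<beta> (x - \<epsilon>) k = beta_digits \<beta> x k"
proof -
  have orbit: "(beta_T \<beta> ^^ k) (x - \<epsilon>) = (beta_T \<beta> ^^ k) x - \<beta> ^ k * \<epsilon>"
    using funpow_beta_T_diff[OF assms(1,2)] assms(3) by simp
  have "\<beta> ^ Suc k * \<epsilon> \<le> (beta_T \<beta> ^^ Suc k) x"
    using bspec[OF assms(3), of "Suc k"] by simp
  then have "\<lfloor>\<beta> * ((beta_T \<beta> ^^ k) x - \<beta> ^ k * \<epsilon>)\<rfloor> = \<lfloor>\<beta> * (beta_T \<beta> ^^ k) x\<rfloor>"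
    using assms(1,2) by (intro floor_beta_mult_diff) (simp_all add: mult.assoc)
  then show ?thesis
    unfolding beta_digits_def orbit .
qed

lemma beta_one_eq_beta_digits:
  assumes "0 < \<beta>" "\<forall>j\<ge>1. 0 < (beta_T \<beta> ^^ j) 1"
  shows "beta_one \<beta> = beta_digits \<beta> 1"
proof
  fix k
  have "eventually (\<lambda>\<epsilon>. \<beta> ^ j * \<epsilon> \<le> (beta_T \<beta> ^^ j) 1) (at_right 0)" if "1 \<le> j" for j
  proof -
    have "0 < (beta_T \<beta> ^^ j) 1 / \<beta> ^ j"
      using assms that by simp
    from eventually_at_right_real[OF this] show ?thesis
      by eventually_elim (use assms(1) in \<open>auto simp: field_simps\<close>)
  qed
  then have "eventually (\<lambda>\<epsilon>. \<forall>j\<in>{1..Suc k}. \<beta> ^ j * \<epsilon> \<le> (beta_T \<beta> ^^ j) 1) (at_right 0)"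
    by (intro eventually_ball_finite) auto
  then have "eventually (\<lambda>\<epsilon>. beta_digits \<beta> (1 - \<epsilon>) k = beta_digits \<beta> 1 k) (at_right 0)"
    using eventually_at_right_less[of 0]
    by eventually_elim (use assms(1) in \<open>simp add: beta_digits_diff\<close>)
  then have "((\<lambda>\<epsilon>. beta_digits \<beta> (1 - \<epsilon>) k) \<longlongrightarrow> beta_digits \<beta> 1 k) (at_right 0)"
    by (rule tendsto_eventually)
  then show "beta_one \<beta> k = beta_digits \<beta> 1 k"
    unfolding beta_one_def by (intro tendsto_Lim) auto
qed

lemma beta_digits_funpow: "beta_digits \<beta> ((beta_T \<beta> ^^ m) x) k = beta_digits \<beta> x (k + m)"
  by (simp add: beta_digits_def funpow_add)

lemma beta_digits_inj:
  assumes "1 < \<beta>"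
    and "\<forall>k. (beta_T \<beta> ^^ k) x \<in> {0..1}" "\<forall>k. (beta_T \<beta> ^^ k) y \<in> {0..1}"
    and "beta_digits \<beta> x = beta_digits \<beta> y"
  shows "x = y"
proof (rule ccontr)
  assume "x \<noteq> y"
  have diff: "(beta_T \<beta> ^^ k) x - (beta_T \<beta> ^^ k) y = \<beta> ^ k * (x - y)" for k
  proof (induction k)
    case (Suc k)
    have "\<lfloor>\<beta> * (beta_T \<beta> ^^ k) x\<rfloor> = \<lfloor>\<beta> * (beta_T \<beta> ^^ k) y\<rfloor>"
      using fun_cong[OF assms(4), of k] by (simp add: beta_digits_def)
    then have "(beta_T \<beta> ^^ Suc k) x - (beta_T \<beta> ^^ Suc k) y
        = \<beta> * ((beta_T \<beta> ^^ k) x - (beta_T \<beta> ^^ k) y)"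
      unfolding funpow_beta_T_Suc by (simp add: right_diff_distrib)
    then show ?case
      using Suc.IH by simp
  qed simp
  obtain k where "1 / \<bar>x - y\<bar> < \<beta> ^ k"
    using real_arch_pow[OF assms(1)] by blast
  then have "1 < \<beta> ^ k * \<bar>x - y\<bar>"
    using \<open>x \<noteq> y\<close> by (simp add: field_simps)
  then have "1 < \<bar>(beta_T \<beta> ^^ k) x - (beta_T \<beta> ^^ k) y\<bar>"
    using assms(1) by (simp add: diff abs_mult)
  then show False
    using assms(2,3)[rule_format, of k] by auto
qed

lemma periodic_from_beta_digits_one_iff:
  assumes "1 < \<beta>"
  shows "periodic_from (beta_digits \<beta> 1) m p \<longleftrightarrow>
    1 \<le> p \<and> (beta_T \<beta> ^^ (m + p)) 1 = (beta_T \<beta> ^^ m) 1"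
proof
  assume per: "periodic_from (beta_digits \<beta> 1) m p"
  have "beta_digits \<beta> ((beta_T \<beta> ^^ (m + p)) 1) = beta_digits \<beta> ((beta_T \<beta> ^^ m) 1)"
  proof
    fix j
    show "beta_digits \<beta> ((beta_T \<beta> ^^ (m + p)) 1) j = beta_digits \<beta> ((beta_T \<beta> ^^ m) 1) j"
      using per unfolding periodic_from_def beta_digits_funpow by (simp add: add.assoc[symmetric])
  qed
  moreover have "(beta_T \<beta> ^^ k) ((beta_T \<beta> ^^ j) 1) \<in> {0..1}" for j k
    using funpow_beta_T_one_bounds[of "k + j" \<beta>] by (simp add: funpow_add)
  ultimately show "1 \<le> p \<and> (beta_T \<beta> ^^ (m + p)) 1 = (beta_T \<beta> ^^ m) 1"
    using per beta_digits_inj[OF assms] unfolding periodic_from_def by blast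
next
  assume "1 \<le> p \<and> (beta_T \<beta> ^^ (m + p)) 1 = (beta_T \<beta> ^^ m) 1"
  then have "(beta_T \<beta> ^^ (k + p)) 1 = (beta_T \<beta> ^^ k) 1" if "m \<le> k" for k
    using funpow_shift[where f = "beta_T \<beta>" and a = "m + p" and x = 1 and b = m and j = "k - m"] that
    by (simp add: algebra_simps)
  then show "periodic_from (beta_digits \<beta> 1) m p"
    using \<open>1 \<le> p \<and> _\<close> unfolding periodic_from_def beta_digits_def by simp
qed

lemma mp_periodic_beta_digits_one:
  assumes "1 < \<beta>" "1 \<le> p" "(beta_T \<beta> ^^ Suc p) 1 = beta_T \<beta> 1"
    and "\<forall>k\<in>{1..<p}. (beta_T \<beta> ^^ k) 1 \<noteq> (beta_T \<beta> ^^ p) 1"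
  shows "mp_periodic (beta_digits \<beta> 1) 1 p"
  unfolding mp_periodic_def periodic_from_beta_digits_one_iff[OF assms(1)]
proof (intro conjI allI impI)
  show "1 \<le> p" "(beta_T \<beta> ^^ (1 + p)) 1 = (beta_T \<beta> ^^ 1) 1"
    using assms(2,3) by simp_all
next
  fix m' p'
  assume per: "1 \<le> p' \<and> (beta_T \<beta> ^^ (m' + p')) 1 = (beta_T \<beta> ^^ m') 1"
  show "1 \<le> m'"
  proof (rule ccontr)
    assume "\<not> 1 \<le> m'"
    then have "(beta_T \<beta> ^^ p') 1 = 1"
      using per by (simp add: not_less_eq_eq)
    moreover obtain j where "p' = Suc j"
      using per by (cases p') auto
    ultimately show False
      using beta_T_bounds(2)[of \<beta> "(beta_T \<beta> ^^ j) 1"] by simp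
  qed
next
  fix p'
  assume p': "1 \<le> p' \<and> (beta_T \<beta> ^^ (1 + p')) 1 = (beta_T \<beta> ^^ 1) 1"
  show "p \<le> p'"
  proof (rule ccontr)
    assume "\<not> p \<le> p'"
    have "p - 1 - p' + (1 + p') = p" "p - 1 - p' + 1 = p - p'"
      using \<open>\<not> p \<le> p'\<close> by simp_all
    then have "(beta_T \<beta> ^^ p) 1 = (beta_T \<beta> ^^ (p - p')) 1"
      using funpow_shift[OF p'[THEN conjunct2], of "p - 1 - p'"] by (simp only:)
    moreover have "p - p' \<in> {1..<p}"
      using \<open>\<not> p \<le> p'\<close> p' by auto
    ultimately show False
      using assms(4) by auto
  qed
qed

lemma beta_one_mp_periodic:
  assumes "1 < \<beta>" "1 \<le> p" "(beta_T \<beta> ^^ Suc p) 1 = beta_T \<beta> 1"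
    and "\<forall>k\<in>{1..p}. 0 < (beta_T \<beta> ^^ k) 1"
    and "\<forall>k\<in>{1..<p}. (beta_T \<beta> ^^ k) 1 \<noteq> (beta_T \<beta> ^^ p) 1"
  shows "mp_periodic (beta_one \<beta>) 1 p"
proof -
  have "0 < (beta_T \<beta> ^^ k) 1" if "1 \<le> k" for k
  proof -
    define j where "j = 1 + (k - 1) mod p"
    have "(beta_T \<beta> ^^ k) 1 = (beta_T \<beta> ^^ j) 1"
      unfolding j_def by (rule funpow_eq_funpow_mod) (use assms(2,3) that in simp_all)
    moreover have "j \<in> {1..p}"
      using assms(2) by (simp add: j_def Suc_le_eq)
    ultimately show ?thesis
      using assms(4) by auto
  qed
  then have "beta_one \<beta> = beta_digits \<beta> 1"
    using beta_one_eq_beta_digits assms(1) by simp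
  then show ?thesis
    using mp_periodic_beta_digits_one assms by simp
qed

lemma coeff_linear_factor_recurrence:
  fixes f :: "int poly" and E :: "real poly"
  assumes "map_poly of_int f = [:1, -\<beta>:] * E"
  shows "\<beta> * coeff E k = of_int (- coeff f (Suc k)) + coeff E (Suc k)"
  using arg_cong[OF assms, of "\<lambda>p. coeff p (Suc k)"] by (simp add: coeff_map_poly mult_pCons_left)

lemma funpow_beta_T_one_eq_coeff:
  fixes f :: "int poly" and E :: "real poly"
  assumes f: "map_poly of_int f = [:1, -\<beta>:] * E" and "coeff E 0 = 1"
    and "\<forall>k\<in>{1..K}. 0 \<le> coeff E k \<and> coeff E k < 1" "k \<le> K"
  shows "(beta_T \<beta> ^^ k) 1 = coeff E k"
  using assms(4)
proof (induction k)
  case (Suc k)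
  from coeff_linear_factor_recurrence[OF f]
  have "beta_T \<beta> (coeff E k) = coeff E (Suc k)"
    by (rule beta_T_eqI) (use assms(3) Suc.prems in auto)
  then show ?case
    using Suc by simp
qed (simp add: assms(2))

lemma eq_0_if_coeffs_mult_Ints:
  fixes Q D :: "'a::linordered_idom poly"
  assumes "coeff Q 0 = 1" "\<forall>j. coeff (Q * D) j \<in> \<int>" "\<forall>j. \<bar>coeff D j\<bar> < 1"
  shows "D = 0"
proof -
  have "coeff D j = 0" for j
  proof (induction j rule: less_induct)
    case (less j)
    have "coeff (Q * D) j = coeff Q 0 * coeff D j + (\<Sum>i\<in>{..j} - {0}. coeff Q i * coeff D (j - i))"
      unfolding coeff_mult by (subst sum.remove[of _ 0]) auto
    also have "\<dots> = coeff D j"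
      using less.IH assms(1) by (auto intro!: sum.neutral)
    finally show ?case
      using assms(2,3) Ints_nonzero_abs_less1 by metis
  qed
  then show ?thesis
    by (simp add: poly_eq_iff)
qed

lemma reflect_poly_map_of_int:
  "reflect_poly (map_poly (of_int :: int \<Rightarrow> 'a::ring_char_0) p) = map_poly of_int (reflect_poly p)"
  by (rule poly_eqI) (simp add: coeff_reflect_poly coeff_map_poly degree_map_poly)

lemma reflect_poly_eq_if_cofactor_nearly_reciprocal:
  fixes f :: "int poly" and Q H :: "real poly"
  assumes f: "map_poly of_int f = Q * H" and Q: "reflect_poly Q = Q" "coeff Q 0 = 1"
    and "\<forall>j. \<bar>coeff H j - coeff (reflect_poly H) j\<bar> < 1"
  shows "reflect_poly f = f"
proof -
  have diff: "Q * (H - reflect_poly H) = map_poly of_int f - map_poly of_int (reflect_poly f)"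
    by (simp add: f Q(1) right_diff_distrib reflect_poly_mult flip: reflect_poly_map_of_int)
  then have "\<forall>j. coeff (Q * (H - reflect_poly H)) j \<in> \<int>"
    by (simp add: coeff_map_poly)
  with Q(2) assms(4) have "H - reflect_poly H = 0"
    by (intro eq_0_if_coeffs_mult_Ints) simp_all
  with diff have "map_poly (of_int :: int \<Rightarrow> real) (reflect_poly f) = map_poly of_int f"
    by simp
  then show ?thesis
    by (simp add: poly_eq_iff coeff_map_poly)
qed

(* H plays the cofactor f / ((x - \<beta>)(x - 1/\<beta>)); the constants u, v of the theorem enter only
   through coeff_H_between. *)
locale beta_cofactor =
  fixes \<beta> :: real and N :: nat and H :: "real poly"
  assumes beta_gt_1: "1 < \<beta>" and two_le_N: "2 \<le> N"
    and degree_H: "degree H = N" and coeff_H_0: "coeff H 0 = 1" and coeff_H_N: "coeff H N = 1"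
    and coeff_H_between: "\<And>j. 0 < j \<Longrightarrow> j < N \<Longrightarrow> 1 / \<beta> < coeff H j \<and> coeff H j < 1 - 1 / \<beta>"
begin

lemma inverse_beta_bounds: "0 < 1 / \<beta>" "1 / \<beta> < 1"
  using beta_gt_1 by simp_all

lemma coeff_H_bounds:
  assumes "j \<le> N"
  shows "0 < coeff H j \<and> coeff H j \<le> 1"
proof (cases "j = 0 \<or> j = N")
  case False
  with assms have "1 / \<beta> < coeff H j \<and> coeff H j < 1 - 1 / \<beta>"
    by (intro coeff_H_between) auto
  then show ?thesis
    using inverse_beta_bounds by linarith
qed (use coeff_H_0 coeff_H_N in auto)

lemma coeff_reflect_H_close: "\<bar>coeff H j - coeff (reflect_poly H) j\<bar> < 1"
proof (cases "0 < j \<and> j < N")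
  case True
  then have "1 / \<beta> < coeff H j \<and> coeff H j < 1 - 1 / \<beta>"
    "1 / \<beta> < coeff H (N - j) \<and> coeff H (N - j) < 1 - 1 / \<beta>"
    by (simp_all add: coeff_H_between)
  moreover have "coeff (reflect_poly H) j = coeff H (N - j)"
    using True by (simp add: coeff_reflect_poly degree_H)
  ultimately show ?thesis
    using inverse_beta_bounds unfolding abs_less_iff by linarith
next
  case False
  then show ?thesis
    using coeff_H_0 coeff_H_N by (auto simp: coeff_reflect_poly degree_H coeff_eq_0)
qed

lemma reflect_poly_eq:
  fixes f :: "int poly"
  assumes "map_poly of_int f = [:-\<beta>, 1:] * [:-1 / \<beta>, 1:] * H"
  shows "reflect_poly f = f"
proof (rule reflect_poly_eq_if_cofactor_nearly_reciprocal[OF assms])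
  show "reflect_poly ([:-\<beta>, 1:] * [:-1 / \<beta>, 1:]) = [:-\<beta>, 1:] * [:-1 / \<beta>, 1:]"
    using beta_gt_1 by (simp add: reflect_poly_mult reflect_poly_pCons field_simps)
qed (use beta_gt_1 coeff_reflect_H_close in simp_all)

abbreviation E :: "real poly" where
  "E \<equiv> [:1, -1 / \<beta>:] * H"

lemma coeff_E:
  "coeff E 0 = 1"
  "coeff E (Suc k) = coeff H (Suc k) - coeff H k / \<beta>"
  by (simp_all add: mult_pCons_left coeff_H_0)

lemma coeff_E_bounds:
  assumes "1 \<le> k" "k \<le> N"
  shows "0 < coeff E k \<and> coeff E k < 1 \<and> coeff E k \<noteq> 1 - 1 / \<beta>"
proof -
  obtain j where k: "k = Suc j"
    using assms(1) by (cases k) auto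
  have e: "coeff E k = coeff H (Suc j) - coeff H j / \<beta>"
    unfolding k by (rule coeff_E(2))
  have "0 < coeff H j / \<beta>" "coeff H j / \<beta> \<le> 1 / \<beta>"
    using coeff_H_bounds[of j] assms(2) beta_gt_1 k by (simp_all add: divide_right_mono)
  show ?thesis
  proof (cases "Suc j = N")
    case True
    then have "coeff H j < 1 - 1 / \<beta>"
      using two_le_N by (simp add: coeff_H_between)
    then have "coeff H j < 1"
      using inverse_beta_bounds by linarith
    then have "coeff H j / \<beta> < 1 / \<beta>"
      using beta_gt_1 by (simp add: divide_strict_right_mono)
    moreover have "coeff H (Suc j) = 1"
      using True coeff_H_N by simp
    ultimately show ?thesis
      unfolding e using \<open>0 < coeff H j / \<beta>\<close> inverse_beta_bounds by linarith
  next
    case False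
    then have "1 / \<beta> < coeff H (Suc j) \<and> coeff H (Suc j) < 1 - 1 / \<beta>"
      using assms(2) k by (simp add: coeff_H_between)
    then show ?thesis
      unfolding e using \<open>0 < coeff H j / \<beta>\<close> \<open>coeff H j / \<beta> \<le> 1 / \<beta>\<close> inverse_beta_bounds
      by linarith
  qed
qed

lemma beta_orbit_one:
  fixes f :: "int poly"
  assumes f: "map_poly of_int f = [:-\<beta>, 1:] * [:-1 / \<beta>, 1:] * H"
  shows "(beta_T \<beta> ^^ Suc (Suc N)) 1 = beta_T \<beta> 1"
    and "\<forall>k\<in>{1..Suc N}. 0 < (beta_T \<beta> ^^ k) 1"
    and "\<forall>k\<in>{1..N}. (beta_T \<beta> ^^ k) 1 \<noteq> (beta_T \<beta> ^^ Suc N) 1"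
proof -
  have "[:-\<beta>, 1:] * [:-1 / \<beta>, 1:] = [:1, -\<beta>:] * [:1, -1 / \<beta>:]"
    using beta_gt_1 by (simp add: field_simps)
  with f have f': "map_poly of_int f = [:1, -\<beta>:] * E"
    by (simp only: mult.assoc)
  have "\<forall>k\<in>{1..N}. 0 \<le> coeff E k \<and> coeff E k < 1"
    using coeff_E_bounds by (meson atLeastAtMost_iff less_imp_le)
  note orbit = funpow_beta_T_one_eq_coeff[OF f' coeff_E(1) this]
  have last: "(beta_T \<beta> ^^ Suc N) 1 = 1 - 1 / \<beta>"
  proof -
    have "coeff E (Suc N) = - 1 / \<beta>"
      using coeff_E(2)[of N] coeff_H_N degree_H by (simp add: coeff_eq_0)
    then have "\<beta> * coeff E N = of_int (- coeff f (Suc N) - 1) + (1 - 1 / \<beta>)"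
      using coeff_linear_factor_recurrence[OF f', of N] by simp
    then have "beta_T \<beta> (coeff E N) = 1 - 1 / \<beta>"
      by (rule beta_T_eqI) (use inverse_beta_bounds in auto)
    then show ?thesis
      using orbit[of N] by simp
  qed
  show "(beta_T \<beta> ^^ Suc (Suc N)) 1 = beta_T \<beta> 1"
    using last beta_T_diff_inverse[of \<beta> 1] beta_gt_1 by simp
  show "\<forall>k\<in>{1..Suc N}. 0 < (beta_T \<beta> ^^ k) 1"
    using orbit coeff_E_bounds last inverse_beta_bounds by (auto simp: le_Suc_eq)
  show "\<forall>k\<in>{1..N}. (beta_T \<beta> ^^ k) 1 \<noteq> (beta_T \<beta> ^^ Suc N) 1"
    using orbit coeff_E_bounds last by auto
qed

end

lemma coeff_monom_add_one_add_sum: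
  fixes g :: "nat \<Rightarrow> 'a::comm_semiring_1"
  assumes "1 \<le> N"
  shows "coeff (monom 1 N + 1 + (\<Sum>i = 1..N - 1. monom (g i) i)) j =
    (if j = 0 \<or> j = N then 1 else if j < N then g j else 0)"
  using assms by (auto simp: coeff_sum coeff_monom)

theorem lemma1:
  fixes u v \<beta> :: real and n :: nat and f :: "int poly" and g :: "nat \<Rightarrow> real"
  assumes "0 < u" "u < v" "v < 1" "n \<ge> 1"
    and "\<beta> > 1"
    and "lead_coeff f = 1" "degree f = 2 * n + 2"
    and "poly (map_poly of_int f) \<beta> = 0" "poly f 0 = 1"
    and "\<beta> > max (2 / u) (1 / (1 - v))"
    and "map_poly of_int f = [:-\<beta>, 1:] * [:-1/\<beta>, 1:] *
           (monom 1 (2 * n) + 1 + (\<Sum>i = 1..2 * n - 1. monom (g i) i))"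
    and "\<forall>i\<in>{1..2 * n - 1}. u < g i \<and> g i < v"
  shows "reflect_poly f = f \<and> mp_periodic (beta_one \<beta>) 1 (2 * n + 1)"
proof -
  define H :: "real poly" where "H = monom 1 (2 * n) + 1 + (\<Sum>i = 1..2 * n - 1. monom (g i) i)"
  have coeff_H: "coeff H j = (if j = 0 \<or> j = 2 * n then 1 else if j < 2 * n then g j else 0)" for j
    unfolding H_def using assms(4) by (intro coeff_monom_add_one_add_sum) simp
  have "1 / \<beta> < u" "v < 1 - 1 / \<beta>"
    using assms(1,3,5,10) by (auto simp: field_simps)
  interpret beta_cofactor \<beta> "2 * n" H
  proof
    show "degree H = 2 * n"
      using coeff_H by (intro antisym degree_le le_degree) auto
    show "1 / \<beta> < coeff H j \<and> coeff H j < 1 - 1 / \<beta>" if "0 < j" "j < 2 * n" for j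
    proof -
      have "coeff H j = g j" "u < g j \<and> g j < v"
        using coeff_H[of j] assms(12) that by auto
      then show ?thesis
        using \<open>1 / \<beta> < u\<close> \<open>v < 1 - 1 / \<beta>\<close> by linarith
    qed
  qed (use assms(4,5) coeff_H in auto)
  have f: "map_poly of_int f = [:-\<beta>, 1:] * [:-1 / \<beta>, 1:] * H"
    using assms(11) unfolding H_def .
  have "mp_periodic (beta_one \<beta>) 1 (Suc (2 * n))"
    by (rule beta_one_mp_periodic[OF assms(5)])
      (use beta_orbit_one[OF f] in \<open>simp_all add: atLeastLessThanSuc_atLeastAtMost\<close>)
  with reflect_poly_eq[OF f] show ?thesis
    by simp
qed

end
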